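(* In the setting of the context, assume in addition that there is $\mathcal{R}>0$ with $\nabla m(x)=0$ whenever $\|x\|\ge\mathcal{R}$. Then with $M=\frac34$ and $R=8L\mathcal{R}$, for all $x,y\in\mathbb{H}$ with $\|x-y\|_\alpha\ge R$, $$\mathbf{1}_{x^l\ne y^l}\Big\langle\frac{x^l-y^l}{\|x^l-y^l\|},b(x)-b(y)\Big\rangle+\mathbf{1}_{x^h\ne y^h}\,\alpha\Big\langle\frac{x^h-y^h}{\|x^h-y^h\|},b(x)-b(y)\Big\rangle\le M\|x-y\|_\alpha .$$
   Context: Let $(\mathbb{H},\langle\cdot,\cdot\rangle,\|\cdot\|)$ be a separable real Hilbert space and $\mathcal{G}$ a trace-class, symmetric, positive definite operator on $\mathbb{H}$. Let $(e_k)_{k\ge1}$ be an orthonormal basis with $\mathcal{G}e_k=\lambda_ke_k$, where $\lambda_k>0$, $\lambda_k\downarrow0$, $\lambda_1=1$, $\sum_k\lambda_k<\infty$. Let $U(x)=\frac a2\|x\|^2+m(x)$ with $a\ge0$, where $m:\mathbb{H}\to\mathbb{R}$ is bounded from below and Fréchet differentiable with $\|\nabla m(x)-\nabla m(y)\|\le L\|x-y\|$ for all $x,y$, for some $L\ge1$. Set $b(x)=-\mathcal{G}\nabla U(x)$. Let $n=\min\{k\in\mathbb{N}_+:\lambda_{k+1}<\frac{1}{2L}\}$, $\mathbb{H}^l=\mathrm{span}\{e_1,\dots,e_n\}$, $\mathbb{H}^h$ its orthogonal complement, $x^l,x^h$ the orthogonal projections, $\alpha=2(1+L)$ and $\|x\|_\alpha=\|x^l\|+\alpha\|x^h\|$.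 *)

theory Defs
  imports "HOL-Analysis.Analysis"
begin

text \<open>Eigenvalues are indexed from 0: lam k stands for the paper's lambda_(k+1),
  and e k for the paper's e_(k+1).\<close>

text \<open>n = min{k >= 1 : lambda_(k+1) < 1/(2L)}; with 0-based indexing lambda_(k+1) = lam k.\<close>
definition low_dim :: "(nat \<Rightarrow> real) \<Rightarrow> real \<Rightarrow> nat" where
  "low_dim lam L = (LEAST k. 1 \<le> k \<and> lam k < 1 / (2 * L))"

definition proj_low :: "(nat \<Rightarrow> 'a::real_inner) \<Rightarrow> nat \<Rightarrow> 'a \<Rightarrow> 'a" where
  "proj_low e n x = (\<Sum>i<n. (x \<bullet> e i) *\<^sub>R e i)"

definition proj_high :: "(nat \<Rightarrow> 'a::real_inner) \<Rightarrow> nat \<Rightarrow> 'a \<Rightarrow> 'a" where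
  "proj_high e n x = x - proj_low e n x"

definition alpha_norm :: "real \<Rightarrow> (nat \<Rightarrow> 'a::real_inner) \<Rightarrow> nat \<Rightarrow> 'a \<Rightarrow> real" where
  "alpha_norm \<alpha> e n x = norm (proj_low e n x) + \<alpha> * norm (proj_high e n x)"

end

theory Submission
  imports Defs
begin

text \<open>Write \<open>b x - b y = - a G (x - y) - G (\<nabla>m x - \<nabla>m y)\<close>. Since \<open>G\<close> is diagonal in the
  basis \<open>e\<close> with nonnegative eigenvalues, it commutes with both projections and is positive on
  both subspaces, so the confining term \<open>- a G (x - y)\<close> only decreases the left-hand side. The
  remaining term contributes at most \<open>\<parallel>\<nabla>m x - \<nabla>m y\<parallel>\<close> on the low modes (\<open>\<parallel>G\<parallel> \<le> 1\<close>) and at most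
  \<open>\<alpha> \<lambda>\<^sub>n\<^sub>+\<^sub>1 \<parallel>\<nabla>m x - \<nabla>m y\<parallel> \<le> 2 \<parallel>\<nabla>m x - \<nabla>m y\<parallel>\<close> on the high modes (\<open>G\<close> is self-adjoint and
  contracts the high modes by \<open>\<lambda>\<^sub>n\<^sub>+\<^sub>1 < 1/(2L)\<close>). As \<open>\<nabla>m\<close> is \<open>L\<close>-Lipschitz and vanishes outside
  the ball of radius \<open>\<R>\<close>, it is bounded by \<open>L\<R>\<close>, so the left-hand side is at most
  \<open>6L\<R> \<le> (3/4) \<parallel>x - y\<parallel>\<^sub>\<alpha>\<close>.\<close>

lemma proj_low_diff: "proj_low e n x - proj_low e n y = proj_low e n (x - y)"
  by (simp add: proj_low_def inner_diff_left scaleR_diff_left sum_subtractf)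

lemma proj_high_diff: "proj_high e n x - proj_high e n y = proj_high e n (x - y)"
  using proj_low_diff[of e n x y] by (simp add: proj_high_def algebra_simps)

lemma proj_high_0 [simp]: "proj_high e 0 x = x"
  by (simp add: proj_high_def proj_low_def)

lemma continuous_on_proj_high: "continuous_on UNIV (proj_high e n)"
  unfolding proj_high_def proj_low_def by (intro continuous_intros)

lemma norm_le_of_lipschitz_vanishing:
  fixes f :: "'a::real_normed_vector \<Rightarrow> 'b::real_normed_vector" and v :: 'a
  assumes lipschitz: "\<And>x y. norm (f x - f y) \<le> L * norm (x - y)"
    and vanish: "\<And>x. R \<le> norm x \<Longrightarrow> f x = 0"
    and "0 \<le> L" "0 \<le> R" "v \<noteq> 0"
  shows "norm (f x) \<le> L * R"
proof (cases "R \<le> norm x")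
  case True
  then show ?thesis using vanish assms(3,4) by simp
next
  case False
  define u where "u = (if x = 0 then v else x)"
  define w where "w = (R / norm u) *\<^sub>R u"
  have "u \<noteq> 0" using \<open>v \<noteq> 0\<close> by (simp add: u_def)
  then have "norm w = R" using \<open>0 \<le> R\<close> by (simp add: w_def)
  have "norm (x - w) \<le> R"
  proof (cases "x = 0")
    case True
    then show ?thesis using \<open>norm w = R\<close> by simp
  next
    case False
    then have "x - w = (1 - R / norm x) *\<^sub>R x" by (simp add: w_def u_def algebra_simps)
    also have "norm \<dots> = R - norm x"
      using False \<open>\<not> R \<le> norm x\<close> by (simp add: abs_if field_simps)
    finally show ?thesis by simp
  qed
  have "norm (f x) = norm (f x - f w)"
    using vanish[of w] \<open>norm w = R\<close> by simp
  also have "\<dots> \<le> L * norm (x - w)" by (rule lipschitz)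
  also have "\<dots> \<le> L * R" using \<open>norm (x - w) \<le> R\<close> \<open>0 \<le> L\<close> by (rule mult_left_mono)
  finally show ?thesis .
qed

lemma low_dim_less:
  assumes "lam \<longlonglongrightarrow> 0" "0 < L"
  shows "lam (low_dim lam L) < 1 / (2 * L)"
proof -
  have "\<forall>\<^sub>F k in sequentially. lam k < 1 / (2 * L)"
    using order_tendstoD(2)[OF assms(1)] assms(2) by simp
  then obtain N where "\<And>k. N \<le> k \<Longrightarrow> lam k < 1 / (2 * L)"
    unfolding eventually_sequentially by blast
  then have "\<exists>k. 1 \<le> k \<and> lam k < 1 / (2 * L)"
    by (intro exI[of _ "max N 1"]) auto
  then show ?thesis unfolding low_dim_def by (metis (mono_tags, lifting) LeastI_ex)
qed

lemma normalized_inner_drift_le: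
  fixes v p q :: "'a::real_inner"
  assumes "0 \<le> a" "0 \<le> c" "0 \<le> K" "0 \<le> v \<bullet> p" "- (v \<bullet> q) \<le> norm v * K"
  shows "(if v \<noteq> 0 then c * (((1 / norm v) *\<^sub>R v) \<bullet> (- (a *\<^sub>R p) - q)) else 0) \<le> c * K"
proof (cases "v = 0")
  case False
  have "((1 / norm v) *\<^sub>R v) \<bullet> (- (a *\<^sub>R p) - q) = (- (a * (v \<bullet> p)) - v \<bullet> q) / norm v"
    by (simp add: inner_diff_right divide_simps)
  also have "\<dots> \<le> norm v * K / norm v"
    using assms(5) mult_nonneg_nonneg[OF assms(1,4)] by (intro divide_right_mono) auto
  also have "\<dots> = K" using False by simp
  finally show ?thesis using False assms(2) by (simp add: mult_left_mono flip: times_divide_eq_right)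
qed (use assms in simp)

locale orthonormal_seq =
  fixes e :: "nat \<Rightarrow> 'a::real_inner"
  assumes orthonormal: "\<And>i j. e i \<bullet> e j = (if i = j then 1 else 0)"
begin

lemma inner_sum_basis:
  assumes "finite A"
  shows "(\<Sum>i\<in>A. c i *\<^sub>R e i) \<bullet> e j = (if j \<in> A then c j else 0)"
  using assms by (simp add: inner_sum_left orthonormal if_distrib sum.delta' cong: if_cong)

lemma inner_sum_sum:
  assumes "finite A" "finite B"
  shows "(\<Sum>i\<in>A. c i *\<^sub>R e i) \<bullet> (\<Sum>j\<in>B. d j *\<^sub>R e j) = (\<Sum>i\<in>A \<inter> B. c i * d i)"
proof -
  have "(\<Sum>i\<in>A. c i *\<^sub>R e i) \<bullet> (\<Sum>j\<in>B. d j *\<^sub>R e j) = (\<Sum>j\<in>B. if j \<in> A then c j * d j else 0)"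
    using assms by (simp add: inner_sum_right inner_sum_basis if_distrib mult.commute cong: if_cong)
  also have "\<dots> = (\<Sum>i\<in>A \<inter> B. c i * d i)"
    using assms by (simp add: sum.inter_restrict[symmetric] Int_commute)
  finally show ?thesis .
qed

lemma norm_sum_squared:
  "finite A \<Longrightarrow> (norm (\<Sum>i\<in>A. c i *\<^sub>R e i))\<^sup>2 = (\<Sum>i\<in>A. (c i)\<^sup>2)"
  by (simp only: power2_norm_eq_inner) (simp add: inner_sum_sum power2_eq_square)

lemma span_eventually_partial_sum:
  assumes "u \<in> span (range e)"
  shows "\<forall>\<^sub>F M in sequentially. u = (\<Sum>i<M. (u \<bullet> e i) *\<^sub>R e i)"
proof (rule span_induct[OF assms])
  show "subspace {u. \<forall>\<^sub>F M in sequentially. u = (\<Sum>i<M. (u \<bullet> e i) *\<^sub>R e i)}"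
    unfolding subspace_def
  proof (intro conjI ballI allI; clarsimp)
    show "\<forall>\<^sub>F M in sequentially. x + y = (\<Sum>i<M. ((x + y) \<bullet> e i) *\<^sub>R e i)"
      if "\<forall>\<^sub>F M in sequentially. x = (\<Sum>i<M. (x \<bullet> e i) *\<^sub>R e i)"
        and "\<forall>\<^sub>F M in sequentially. y = (\<Sum>i<M. (y \<bullet> e i) *\<^sub>R e i)" for x y
      using that by eventually_elim (simp add: inner_add_left scaleR_add_left sum.distrib)
    show "\<forall>\<^sub>F M in sequentially. c *\<^sub>R x = (\<Sum>i<M. (c * (x \<bullet> e i)) *\<^sub>R e i)"
      if "\<forall>\<^sub>F M in sequentially. x = (\<Sum>i<M. (x \<bullet> e i) *\<^sub>R e i)" for c x
      using that
    proof eventually_elim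
      case (elim M)
      then have "c *\<^sub>R x = c *\<^sub>R (\<Sum>i<M. (x \<bullet> e i) *\<^sub>R e i)" by (rule arg_cong)
      then show ?case by (simp add: scaleR_sum_right)
    qed
  qed
next
  fix u assume "u \<in> range e"
  then obtain j where u: "u = e j" by blast
  have expansion: "e j = (\<Sum>i<M. (e j \<bullet> e i) *\<^sub>R e i)" if "j < M" for M
  proof -
    have "(\<Sum>i<M. (e j \<bullet> e i) *\<^sub>R e i) = (\<Sum>i<M. if i = j then e i else 0)"
      by (rule sum.cong) (auto simp: orthonormal)
    then show ?thesis using that by simp
  qed
  show "\<forall>\<^sub>F M in sequentially. u = (\<Sum>i<M. (u \<bullet> e i) *\<^sub>R e i)"
    using eventually_mono[OF eventually_gt_at_top[of j] expansion] by (simp add: u)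
qed

lemma span_partial_sumE:
  assumes "u \<in> span (range e)"
  obtains M where "n \<le> M" "u = (\<Sum>i<M. (u \<bullet> e i) *\<^sub>R e i)"
  using eventually_happens'[OF _ eventually_conj[OF eventually_ge_at_top[of n]
        span_eventually_partial_sum[OF assms]]] that by auto

lemma proj_high_inner_basis: "i < n \<Longrightarrow> proj_high e n w \<bullet> e i = 0"
  by (simp add: proj_high_def proj_low_def inner_diff_left inner_sum_basis)

lemma proj_low_orthogonal_high: "proj_low e n u \<bullet> proj_high e n w = 0"
  by (simp add: proj_low_def inner_sum_left inner_commute[of "e _"] proj_high_inner_basis)

lemma proj_high_partial_sum:
  assumes "n \<le> M" "u = (\<Sum>i<M. (u \<bullet> e i) *\<^sub>R e i)"
  shows "proj_high e n u = (\<Sum>i\<in>{n..<M}. (u \<bullet> e i) *\<^sub>R e i)"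
proof -
  have "(\<Sum>i<M. (u \<bullet> e i) *\<^sub>R e i) = proj_low e n u + (\<Sum>i\<in>{n..<M}. (u \<bullet> e i) *\<^sub>R e i)"
    using assms(1) sum.atLeastLessThan_concat[of 0 n M "\<lambda>i. (u \<bullet> e i) *\<^sub>R e i"]
    by (simp add: proj_low_def atLeast0LessThan)
  with assms(2) have "u = proj_low e n u + (\<Sum>i\<in>{n..<M}. (u \<bullet> e i) *\<^sub>R e i)"
    by (rule trans)
  then show ?thesis by (simp add: proj_high_def algebra_simps)
qed

end

locale eigenbasis = orthonormal_seq e for e :: "nat \<Rightarrow> 'a::real_inner" +
  fixes lam :: "nat \<Rightarrow> real" and G :: "'a \<Rightarrow> 'a"
  assumes dense_span: "closure (span (range e)) = UNIV"
    and bounded_linear_G: "bounded_linear G"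
    and G_eigen: "\<And>k. G (e k) = lam k *\<^sub>R e k"
begin

lemma linear_G: "linear G"
  using bounded_linear_G bounded_linear.linear by blast

lemma continuous_on_G_comp [continuous_intros]:
  "continuous_on S f \<Longrightarrow> continuous_on S (\<lambda>x. G (f x))"
  by (rule bounded_linear.continuous_on[OF bounded_linear_G])

lemma G_sum: "G (\<Sum>i\<in>A. c i *\<^sub>R e i) = (\<Sum>i\<in>A. (lam i * c i) *\<^sub>R e i)"
  by (simp add: linear_sum[OF linear_G] linear_cmul[OF linear_G] G_eigen mult.commute)

lemma ge_by_density:
  assumes "continuous_on UNIV h" "\<And>v. v \<in> span (range e) \<Longrightarrow> c \<le> (h v :: real)"
  shows "c \<le> h x"
  using continuous_ge_on_closure[of "span (range e)" h x c] assms by (simp add: dense_span)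

lemma eq_by_density:
  assumes "continuous_on UNIV f" "continuous_on UNIV g"
    and "\<And>v. v \<in> span (range e) \<Longrightarrow> f v = (g v :: real)"
  shows "f x = g x"
proof -
  have "0 \<le> f x - g x" "0 \<le> g x - f x"
    by (rule ge_by_density; use assms in \<open>auto intro: continuous_intros\<close>)+
  then show ?thesis by simp
qed

lemma inner_G_basis: "G u \<bullet> e j = lam j * (u \<bullet> e j)"
proof (rule eq_by_density[of "\<lambda>u. G u \<bullet> e j"])
  show "continuous_on UNIV (\<lambda>u. G u \<bullet> e j)" "continuous_on UNIV (\<lambda>u. lam j * (u \<bullet> e j))"
    by (intro continuous_intros)+
next
  fix v assume "v \<in> span (range e)"
  then obtain M where "Suc j \<le> M" "v = (\<Sum>i<M. (v \<bullet> e i) *\<^sub>R e i)"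
    by (rule span_partial_sumE)
  then have "G v = (\<Sum>i<M. (lam i * (v \<bullet> e i)) *\<^sub>R e i)"
    by (metis G_sum)
  with \<open>Suc j \<le> M\<close> show "G v \<bullet> e j = lam j * (v \<bullet> e j)"
    by (simp add: inner_sum_basis)
qed

lemma G_self_adjoint: "G u \<bullet> w = u \<bullet> G w"
proof (rule eq_by_density[of "\<lambda>w. G u \<bullet> w" "\<lambda>w. u \<bullet> G w"])
  show "continuous_on UNIV (\<lambda>w. G u \<bullet> w)" "continuous_on UNIV (\<lambda>w. u \<bullet> G w)"
    by (intro continuous_intros)+
next
  fix v assume "v \<in> span (range e)"
  then obtain M where v: "v = (\<Sum>i<M. (v \<bullet> e i) *\<^sub>R e i)"
    by (rule span_partial_sumE)
  define c where "c i = v \<bullet> e i" for i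
  have "G u \<bullet> v = (\<Sum>i<M. c i * (G u \<bullet> e i))"
    by (subst v) (simp add: inner_sum_right c_def)
  also have "\<dots> = (\<Sum>i<M. lam i * c i * (u \<bullet> e i))"
    by (simp add: inner_G_basis mult_ac)
  also have "\<dots> = u \<bullet> G v"
    by (subst v) (simp add: G_sum inner_sum_right c_def mult_ac)
  finally show "G u \<bullet> v = u \<bullet> G v" .
qed

lemma G_proj_low: "G (proj_low e n u) = proj_low e n (G u)"
  by (simp add: proj_low_def G_sum inner_G_basis)

lemma G_proj_high: "G (proj_high e n u) = proj_high e n (G u)"
  by (simp add: proj_high_def linear_diff[OF linear_G] G_proj_low)

lemma inner_G_nonneg:
  assumes "\<And>i. 0 \<le> lam i"
  shows "0 \<le> u \<bullet> G u"
proof (rule ge_by_density[of "\<lambda>u. u \<bullet> G u"])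
  show "continuous_on UNIV (\<lambda>u. u \<bullet> G u)"
    by (intro continuous_intros)
next
  fix v assume "v \<in> span (range e)"
  then obtain M where v: "v = (\<Sum>i<M. (v \<bullet> e i) *\<^sub>R e i)"
    by (rule span_partial_sumE)
  have "v \<bullet> G v = (\<Sum>i<M. (v \<bullet> e i) *\<^sub>R e i) \<bullet> (\<Sum>i<M. (lam i * (v \<bullet> e i)) *\<^sub>R e i)"
    using v G_sum by metis
  also have "\<dots> = (\<Sum>i<M. lam i * (v \<bullet> e i)\<^sup>2)"
    by (simp add: inner_sum_sum power2_eq_square mult_ac)
  also have "\<dots> \<ge> 0" by (simp add: assms sum_nonneg)
  finally show "0 \<le> v \<bullet> G v" .
qed

lemma norm_G_proj_high_le:
  assumes bound: "\<And>i. n \<le> i \<Longrightarrow> \<bar>lam i\<bar> \<le> k"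
  shows "norm (G (proj_high e n u)) \<le> k * norm (proj_high e n u)"
proof -
  have "0 \<le> k" using bound[of n] by linarith
  have "0 \<le> k * norm (proj_high e n u) - norm (G (proj_high e n u))"
  proof (rule ge_by_density[of "\<lambda>u. k * norm (proj_high e n u) - norm (G (proj_high e n u))"])
    show "continuous_on UNIV (\<lambda>u. k * norm (proj_high e n u) - norm (G (proj_high e n u)))"
      by (intro continuous_intros continuous_on_proj_high)
  next
    fix v assume "v \<in> span (range e)"
    then obtain M where "n \<le> M" "v = (\<Sum>i<M. (v \<bullet> e i) *\<^sub>R e i)"
      by (rule span_partial_sumE)
    then have high: "proj_high e n v = (\<Sum>i\<in>{n..<M}. (v \<bullet> e i) *\<^sub>R e i)"
      by (rule proj_high_partial_sum)
    have "(norm (G (proj_high e n v)))\<^sup>2 = (\<Sum>i\<in>{n..<M}. (lam i)\<^sup>2 * (v \<bullet> e i)\<^sup>2)"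
      by (simp add: high G_sum norm_sum_squared power_mult_distrib)
    also have "\<dots> \<le> (\<Sum>i\<in>{n..<M}. k\<^sup>2 * (v \<bullet> e i)\<^sup>2)"
    proof (intro sum_mono mult_right_mono)
      fix i assume "i \<in> {n..<M}"
      then have "\<bar>lam i\<bar>\<^sup>2 \<le> k\<^sup>2" using bound by (intro power_mono) auto
      then show "(lam i)\<^sup>2 \<le> k\<^sup>2" by simp
    qed simp
    also have "\<dots> = (k * norm (proj_high e n v))\<^sup>2"
      by (simp add: high norm_sum_squared power_mult_distrib sum_distrib_left)
    finally have "norm (G (proj_high e n v)) \<le> k * norm (proj_high e n v)"
      by (rule power2_le_imp_le) (simp add: \<open>0 \<le> k\<close>)
    then show "0 \<le> k * norm (proj_high e n v) - norm (G (proj_high e n v))"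
      by simp
  qed
  then show ?thesis by simp
qed

lemma norm_G_le: "(\<And>i. \<bar>lam i\<bar> \<le> k) \<Longrightarrow> norm (G u) \<le> k * norm u"
  using norm_G_proj_high_le[of 0 k u] by simp

lemma proj_low_inner_G_nonneg:
  assumes "\<And>i. 0 \<le> lam i"
  shows "0 \<le> proj_low e n u \<bullet> G u"
proof -
  have "proj_low e n u \<bullet> G u = proj_low e n u \<bullet> G (proj_low e n u + proj_high e n u)"
    by (simp add: proj_high_def)
  also have "\<dots> = proj_low e n u \<bullet> (G (proj_low e n u) + proj_high e n (G u))"
    by (simp add: linear_add[OF linear_G] G_proj_high)
  also have "\<dots> = proj_low e n u \<bullet> G (proj_low e n u)"
    by (simp add: inner_add_right proj_low_orthogonal_high)
  finally show ?thesis using inner_G_nonneg[OF assms] by simp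
qed

lemma proj_high_inner_G_nonneg:
  assumes "\<And>i. 0 \<le> lam i"
  shows "0 \<le> proj_high e n u \<bullet> G u"
proof -
  have "proj_high e n u \<bullet> G u = proj_high e n u \<bullet> G (proj_low e n u + proj_high e n u)"
    by (simp add: proj_high_def)
  also have "\<dots> = proj_high e n u \<bullet> (proj_low e n (G u) + G (proj_high e n u))"
    by (simp add: linear_add[OF linear_G] G_proj_low)
  also have "\<dots> = proj_high e n u \<bullet> G (proj_high e n u)"
    by (simp add: inner_add_right inner_commute[of _ "proj_low e n _"] proj_low_orthogonal_high)
  finally show ?thesis using inner_G_nonneg[OF assms] by simp
qed

lemma neg_inner_G_le:
  assumes "\<And>i. \<bar>lam i\<bar> \<le> k"
  shows "- (v \<bullet> G w) \<le> norm v * (k * norm w)"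
proof -
  have "- (v \<bullet> G w) \<le> norm v * norm (G w)"
    using Cauchy_Schwarz_ineq2[of v "G w"] by linarith
  also have "\<dots> \<le> norm v * (k * norm w)"
    by (intro mult_left_mono norm_G_le assms) simp
  finally show ?thesis .
qed

lemma proj_high_neg_inner_G_le:
  assumes "\<And>i. n \<le> i \<Longrightarrow> \<bar>lam i\<bar> \<le> k"
  shows "- (proj_high e n v \<bullet> G w) \<le> norm (proj_high e n v) * (k * norm w)"
proof -
  have "- (proj_high e n v \<bullet> G w) = - (G (proj_high e n v) \<bullet> w)"
    by (simp add: G_self_adjoint)
  also have "\<dots> \<le> norm (G (proj_high e n v)) * norm w"
    using Cauchy_Schwarz_ineq2[of "G (proj_high e n v)" w] by linarith
  also have "\<dots> \<le> k * norm (proj_high e n v) * norm w"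
    by (intro mult_right_mono norm_G_proj_high_le assms) simp_all
  finally show ?thesis by (simp add: mult_ac)
qed

lemma projected_drift_le:
  assumes lam_nonneg: "\<And>i. 0 \<le> lam i" and lam_le_1: "\<And>i. lam i \<le> 1"
    and lam_tail: "\<And>i. n \<le> i \<Longrightarrow> lam i \<le> lam n" and "0 \<le> a" "0 \<le> \<alpha>"
  shows "(if proj_low e n x \<noteq> proj_low e n y
            then ((1 / norm (proj_low e n x - proj_low e n y)) *\<^sub>R (proj_low e n x - proj_low e n y))
              \<bullet> (- G (a *\<^sub>R x + f x) - - G (a *\<^sub>R y + f y)) else 0)
       + (if proj_high e n x \<noteq> proj_high e n y
            then \<alpha> * (((1 / norm (proj_high e n x - proj_high e n y)) *\<^sub>R (proj_high e n x - proj_high e n y))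
              \<bullet> (- G (a *\<^sub>R x + f x) - - G (a *\<^sub>R y + f y))) else 0)
       \<le> (1 + \<alpha> * lam n) * norm (f x - f y)"
proof -
  define z d where "z = x - y" and "d = f x - f y"
  have drift: "- G (a *\<^sub>R x + f x) - - G (a *\<^sub>R y + f y) = - (a *\<^sub>R G z) - G d"
    by (simp add: z_def d_def linear_diff[OF linear_G] linear_add[OF linear_G]
        linear_cmul[OF linear_G] algebra_simps)
  have diffs: "proj_low e n x - proj_low e n y = proj_low e n z"
    "proj_high e n x - proj_high e n y = proj_high e n z"
    by (simp_all add: z_def proj_low_diff proj_high_diff)
  then have nonzero: "(proj_low e n x \<noteq> proj_low e n y) = (proj_low e n z \<noteq> 0)"
    "(proj_high e n x \<noteq> proj_high e n y) = (proj_high e n z \<noteq> 0)"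
    by (metis right_minus_eq)+
  have abs_le_1: "\<bar>lam i\<bar> \<le> 1" and abs_tail: "n \<le> i \<Longrightarrow> \<bar>lam i\<bar> \<le> lam n" for i
    using lam_nonneg lam_le_1 lam_tail by auto
  have low: "(if proj_low e n z \<noteq> 0 then ((1 / norm (proj_low e n z)) *\<^sub>R proj_low e n z)
      \<bullet> (- (a *\<^sub>R G z) - G d) else 0) \<le> norm d"
    using normalized_inner_drift_le[where c = 1 and K = "1 * norm d",
        OF \<open>0 \<le> a\<close> _ _ proj_low_inner_G_nonneg[OF lam_nonneg, where n = n and u = z]
        neg_inner_G_le[OF abs_le_1]]
    by (simp split: if_splits)
  have high: "(if proj_high e n z \<noteq> 0 then \<alpha> * (((1 / norm (proj_high e n z)) *\<^sub>R proj_high e n z)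
      \<bullet> (- (a *\<^sub>R G z) - G d)) else 0) \<le> \<alpha> * (lam n * norm d)"
    using normalized_inner_drift_le[where c = \<alpha> and K = "lam n * norm d",
        OF \<open>0 \<le> a\<close> \<open>0 \<le> \<alpha>\<close> mult_nonneg_nonneg[OF lam_nonneg norm_ge_zero]
        proj_high_inner_G_nonneg[OF lam_nonneg, where n = n and u = z]
        proj_high_neg_inner_G_le[OF abs_tail, where v = z and w = d]]
    by simp
  have "(1 + \<alpha> * lam n) * norm d = norm d + \<alpha> * (lam n * norm d)"
    by (simp add: algebra_simps)
  then show ?thesis
    unfolding drift diffs nonzero d_def[symmetric] using low high by linarith
qed

end

theorem mainTheorem12:
  fixes e :: "nat \<Rightarrow> 'a::{real_inner, complete_space}"
    and lam :: "nat \<Rightarrow> real"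
    and G :: "'a \<Rightarrow> 'a"
    and m :: "'a \<Rightarrow> real"
    and gm :: "'a \<Rightarrow> 'a"
    and a L R0 :: real
  assumes orthonormal: "\<And>i j. e i \<bullet> e j = (if i = j then 1 else 0)"
    and complete_basis: "closure (span (range e)) = UNIV"
    and G_bounded_linear: "bounded_linear G"
    and G_eigen: "\<And>k. G (e k) = lam k *\<^sub>R e k"
    and lam_pos: "\<And>k. lam k > 0"
    and lam_decr: "decseq lam"
    and lam_lim: "lam \<longlonglongrightarrow> 0"
    and lam_first: "lam 0 = 1"
    and lam_summable: "summable lam"
    and a_nonneg: "a \<ge> 0"
    and m_bdd_below: "bdd_below (range m)"
    and m_grad: "\<And>x. (m has_derivative (\<lambda>h. gm x \<bullet> h)) (at x)"
    and gm_lipschitz: "\<And>x y. norm (gm x - gm y) \<le> L * norm (x - y)"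
    and L_ge: "L \<ge> 1"
    and R0_pos: "R0 > 0"
    and gm_vanish: "\<And>x. norm x \<ge> R0 \<Longrightarrow> gm x = 0"
  shows "let n = low_dim lam L;
             \<alpha> = 2 * (1 + L);
             b = (\<lambda>x. - G (a *\<^sub>R x + gm x));
             xl = proj_low e n; xh = proj_high e n
         in \<forall>x y. alpha_norm \<alpha> e n (x - y) \<ge> 8 * L * R0 \<longrightarrow>
              (if xl x \<noteq> xl y
                 then ((1 / norm (xl x - xl y)) *\<^sub>R (xl x - xl y)) \<bullet> (b x - b y) else 0)
            + (if xh x \<noteq> xh y
                 then \<alpha> * (((1 / norm (xh x - xh y)) *\<^sub>R (xh x - xh y)) \<bullet> (b x - b y)) else 0)
            \<le> 3 / 4 * alpha_norm \<alpha> e n (x - y)"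
proof -
  interpret eigenbasis e lam G
    using orthonormal complete_basis G_bounded_linear G_eigen
    by (simp add: eigenbasis_def eigenbasis_axioms_def orthonormal_seq_def)
  define n where "n = low_dim lam L"
  have lam_nonneg: "\<And>i. 0 \<le> lam i" using lam_pos less_imp_le by blast
  have lam_le_1: "\<And>i. lam i \<le> 1" using lam_decr lam_first by (metis decseqD le0)
  have lam_tail: "\<And>i. n \<le> i \<Longrightarrow> lam i \<le> lam n" using lam_decr by (simp add: decseq_def)
  have "lam n < 1 / (2 * L)" unfolding n_def using lam_lim L_ge by (intro low_dim_less) auto
  then have alpha_lam: "1 + 2 * (1 + L) * lam n \<le> 3"
    using L_ge mult_right_mono[OF L_ge lam_nonneg[of n]] by (simp add: field_simps)
  have gm_bound: "norm (gm x) \<le> L * R0" for x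
    using orthonormal[of 0 0] L_ge R0_pos
    by (intro norm_le_of_lipschitz_vanishing[of gm L R0 "e 0"] gm_lipschitz gm_vanish) auto
  have drift_bound: "(1 + 2 * (1 + L) * lam n) * norm (gm x - gm y) \<le> 3 * (2 * L * R0)" for x y
    using norm_triangle_ineq4[of "gm x" "gm y"] gm_bound[of x] gm_bound[of y] alpha_lam
    by (intro mult_mono) auto
  have key: "(1 + 2 * (1 + L) * lam n) * norm (gm x - gm y)
      \<le> 3 / 4 * alpha_norm (2 * (1 + L)) e n (x - y)"
    if "8 * L * R0 \<le> alpha_norm (2 * (1 + L)) e n (x - y)" for x y
    using that drift_bound[of x y] by linarith
  show ?thesis unfolding Let_def n_def[symmetric]
    by (intro allI impI order_trans[OF projected_drift_le[OF lam_nonneg lam_le_1 lam_tail a_nonneg]])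
      (use L_ge key in auto)
qed

end
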